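(* For each of the policies LG, LR and LO, let $P_0,Q_0\in\mathcal{M}(H)$ with $P_0\ll Q_0$. Then there exists a coupling of two sequences $(P_n)$ and $(Q_n)$, each satisfying the evolution equation \[ N_n=N_{n-1}+\mathbb{1}_{\{I_n=+\}}\delta_{X_n}-\mathbb{1}_{\{I_n=-,\ N_{n-1}(B(X_n,1))\neq0\}}\delta_{t_1(X_n,N_{n-1})},\quad n\ge1, \] with initial conditions $N_0=P_0$ and $N_0=Q_0$ respectively, such that $P_n\ll Q_n$ for all $n\ge0$.
   Context: $H$ is a compact metric space with distance $d$, $B(x,r)=\{y\in H:d(x,y)<r\}$. $\mathcal{M}(H)$ is the set of finite non-negative Borel measures on $H$ with values in $\mathbb{N}$ (finite point configurations, possibly with multiplicities); support points of $M$ are the $z$ with $M(\{z\})\neq0$. $M\ll P$ means $M(A)\le P(A)$ for all Borel $A$. $\delta_x$ is the Dirac mass at $x$, and $\delta_\partial$ (cemetery state) is the zero measure. $(I_n)_{n\ge1}$ is a sequence of types in $\{+,-\}$ and $(X_n)_{n\ge1}$ a sequence of locations in $H$ (random variables). Kill function, for $M\in\mathcal{M}(H)$: $t_1(x,M)=\partial$ if $M(B(x,1))=0$; otherwise for LG, $t_1(x,M)$ is a support point of $M$ in $B(x,1)$ closest to $x$ (ties broken uniformly at random); for LR, a uniformly random support point of $M$ in $B(x,1)$; for LO ($H\subset\mathbb{R}^d$), a support point $y$ of $M$ in $B(x,1)$ with $y\ge x$ coordinatewise closest to $x$ ($\partial$ if none). Removing $\delta_{t_1}$ removes one unit of mass.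 *)

theory Defs
  imports "HOL-Probability.Probability"
begin

text \<open>Finite N-valued measures (point configurations with multiplicities) are
 represented as multisets; the cemetery state \<open>\<partial>\<close> is \<open>None\<close>.\<close>

datatype sgn = Plus | Minus

definition mass :: "'a multiset \<Rightarrow> 'a set \<Rightarrow> nat" where
  "mass M A = size (filter_mset (\<lambda>y. y \<in> A) M)"

definition abs_le :: "'a::topological_space multiset \<Rightarrow> 'a multiset \<Rightarrow> bool" where
  "abs_le M P \<longleftrightarrow> (\<forall>A \<in> sets borel. mass M A \<le> mass P A)"

definition oball :: "'a::metric_space \<Rightarrow> real \<Rightarrow> 'a set" where
  "oball x r = {y. dist x y < r}"

definition cand_ball :: "'a::metric_space \<Rightarrow> 'a multiset \<Rightarrow> 'a set" where
  "cand_ball x M = {y \<in> set_mset M. y \<in> oball x 1}"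

definition closest :: "'a::metric_space \<Rightarrow> 'a set \<Rightarrow> 'a set" where
  "closest x C = {y \<in> C. \<forall>z \<in> C. dist x y \<le> dist x z}"

definition choose_unif :: "'a set \<Rightarrow> 'a option pmf" where
  "choose_unif C = (if C = {} then return_pmf None else map_pmf Some (pmf_of_set C))"

text \<open>Kill functions t_1 (as probability distributions of the killed point).\<close>
definition kill_LG :: "'a::metric_space \<Rightarrow> 'a multiset \<Rightarrow> 'a option pmf" where
  "kill_LG x M = choose_unif (closest x (cand_ball x M))"

definition kill_LR :: "'a::metric_space \<Rightarrow> 'a multiset \<Rightarrow> 'a option pmf" where
  "kill_LR x M = choose_unif (cand_ball x M)"

definition kill_LO :: "real^'d \<Rightarrow> (real^'d) multiset \<Rightarrow> (real^'d) option pmf" where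
  "kill_LO x M = choose_unif (closest x {y \<in> cand_ball x M. \<forall>k. x $ k \<le> y $ k})"

definition step :: "('a::metric_space \<Rightarrow> 'a multiset \<Rightarrow> 'a option pmf) \<Rightarrow> sgn \<Rightarrow> 'a \<Rightarrow>
    'a multiset \<Rightarrow> 'a multiset pmf" where
  "step t s x N = (case s of
      Plus \<Rightarrow> return_pmf (N + {#x#})
    | Minus \<Rightarrow> (if mass N (oball x 1) = 0 then return_pmf N
               else map_pmf (\<lambda>ko. case ko of None \<Rightarrow> N | Some y \<Rightarrow> N - {#y#}) (t x N)))"

text \<open>Law of the path (N_0,...,N_n) for input sequences i, x (I_n = i n, X_n = x n, n \<ge> 1).\<close>
primrec path_pmf :: "('a::metric_space \<Rightarrow> 'a multiset \<Rightarrow> 'a option pmf) \<Rightarrow> (nat \<Rightarrow> sgn) \<Rightarrow>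
    (nat \<Rightarrow> 'a) \<Rightarrow> 'a multiset \<Rightarrow> nat \<Rightarrow> 'a multiset list pmf" where
  "path_pmf t i x N0 0 = return_pmf [N0]"
| "path_pmf t i x N0 (Suc n) = bind_pmf (path_pmf t i x N0 n)
      (\<lambda>l. map_pmf (\<lambda>N. l @ [N]) (step t (i (Suc n)) (x (Suc n)) (last l)))"

definition coupling_exists :: "('a::metric_space \<Rightarrow> 'a multiset \<Rightarrow> 'a option pmf) \<Rightarrow>
    (nat \<Rightarrow> sgn) \<Rightarrow> (nat \<Rightarrow> 'a) \<Rightarrow> 'a multiset \<Rightarrow> 'a multiset \<Rightarrow> bool" where
  "coupling_exists t i x P0 Q0 \<longleftrightarrow>
    (\<exists>M :: (nat \<Rightarrow> 'a multiset \<times> 'a multiset) measure.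
       prob_space M \<and>
       (\<forall>n l. {\<omega> \<in> space M. map (\<lambda>k. fst (\<omega> k)) [0..<Suc n] = l} \<in> sets M \<and>
              measure M {\<omega> \<in> space M. map (\<lambda>k. fst (\<omega> k)) [0..<Suc n] = l}
                = pmf (path_pmf t i x P0 n) l) \<and>
       (\<forall>n l. {\<omega> \<in> space M. map (\<lambda>k. snd (\<omega> k)) [0..<Suc n] = l} \<in> sets M \<and>
              measure M {\<omega> \<in> space M. map (\<lambda>k. snd (\<omega> k)) [0..<Suc n] = l}
                = pmf (path_pmf t i x Q0 n) l) \<and>
       (AE \<omega> in M. \<forall>n. abs_le (fst (\<omega> n)) (snd (\<omega> n))))"

end

theory Submission
  imports Defs
begin

text \<open>The coupling is built one step at a time. Births are shared. At a kill with \<open>P \<subseteq># Q\<close>, both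
  processes kill uniformly among their eligible points, and \<open>P\<close> reuses the point killed by \<open>Q\<close>
  whenever it is eligible for \<open>P\<close>, redrawing only otherwise. For LG, LR and LO, an eligible point
  of \<open>Q\<close> that is present in \<open>P\<close> is eligible for \<open>P\<close>, and then every point eligible for \<open>P\<close> is
  eligible for \<open>Q\<close>; this is exactly what makes \<open>P \<subseteq># Q\<close> survive the step. The coupled kernels
  drive a Markov chain on a countable set of pairs of configurations, and its path measure
  (Ionescu-Tulcea) is the required coupling.\<close>

section \<open>Coupling two uniform choices\<close>

lemma bind_pmf_of_set_redraw:
  assumes B: "finite B" and AB: "A \<subseteq> B" and A: "A \<noteq> {}"
  shows "bind_pmf (pmf_of_set B) (\<lambda>y. if y \<in> A then return_pmf y else pmf_of_set A) = pmf_of_set A"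
proof (rule pmf_eqI)
  fix w
  have fA: "finite A" using B AB finite_subset by blast
  have Bne: "B \<noteq> {}" using AB A by blast
  have cA: "card A > 0" using fA A by (simp add: card_gt_0_iff)
  have cB: "card B = card A + card (B - A)"
    using B AB by (metis card_Diff_subset card_mono finite_subset le_add_diff_inverse)
  have "(\<Sum>y\<in>B. pmf (if y \<in> A then return_pmf y else pmf_of_set A) w)
      = (\<Sum>y\<in>A. indicator {y} w) + (\<Sum>y\<in>B - A. indicator A w / card A)"
  proof -
    have "(\<Sum>y\<in>B. pmf (if y \<in> A then return_pmf y else pmf_of_set A) w)
       = (\<Sum>y\<in>B. if y \<in> A then indicator {y} w else indicator A w / card A)"
      using fA A by (intro sum.cong) (auto simp: indicator_def)
    also have "\<dots> = (\<Sum>y\<in>B \<inter> {y. y \<in> A}. indicator {y} w) + (\<Sum>y\<in>B \<inter> - {y. y \<in> A}. indicator A w / card A)"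
      using B by (rule sum.If_cases)
    also have "B \<inter> {y. y \<in> A} = A" using AB by auto
    also have "B \<inter> - {y. y \<in> A} = B - A" by auto
    finally show ?thesis .
  qed
  also have "\<dots> = (indicator A w :: real) * card B / card A"
  proof (cases "w \<in> A")
    case True
    have "(\<Sum>y\<in>A. indicator {y} w :: real) = 1"
      using fA True by (simp add: indicator_def)
    then show ?thesis using True cA cB by (simp add: field_simps)
  next
    case False
    then have "(\<Sum>y\<in>A. indicator {y} w :: real) = 0"
      by (intro sum.neutral) (auto simp: indicator_def)
    then show ?thesis using False by simp
  qed
  finally show "pmf (bind_pmf (pmf_of_set B) (\<lambda>y. if y \<in> A then return_pmf y else pmf_of_set A)) w
      = pmf (pmf_of_set A) w"
    using B Bne fA A cA by (simp add: pmf_bind_pmf_of_set)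
qed

text \<open>For \<open>A \<subseteq> B\<close> this is a maximal coupling: the choice from \<open>B\<close> is reused for \<open>A\<close>
  whenever it lies in \<open>A\<close>.\<close>
definition couple_unif :: "'b set \<Rightarrow> 'b set \<Rightarrow> ('b option \<times> 'b option) pmf" where
  "couple_unif A B = (if A \<noteq> {} \<and> A \<subseteq> B then
     bind_pmf (pmf_of_set B) (\<lambda>y. if y \<in> A then return_pmf (Some y, Some y)
                                    else map_pmf (\<lambda>z. (Some z, Some y)) (pmf_of_set A))
     else pair_pmf (choose_unif A) (choose_unif B))"

lemma map_fst_couple_unif:
  assumes "finite B"
  shows "map_pmf fst (couple_unif A B) = choose_unif A"
proof (cases "A \<noteq> {} \<and> A \<subseteq> B")
  case True
  then have "map_pmf fst (couple_unif A B) = map_pmf Some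
      (bind_pmf (pmf_of_set B) (\<lambda>y. if y \<in> A then return_pmf y else pmf_of_set A))"
    by (simp add: couple_unif_def map_bind_pmf map_pmf_comp if_distrib cong: if_cong)
  also have "\<dots> = map_pmf Some (pmf_of_set A)"
    using True assms by (simp add: bind_pmf_of_set_redraw)
  finally show ?thesis using True by (simp add: choose_unif_def)
qed (auto simp: couple_unif_def map_fst_pair_pmf)

lemma map_snd_couple_unif: "map_pmf snd (couple_unif A B) = choose_unif B"
proof (cases "A \<noteq> {} \<and> A \<subseteq> B")
  case True
  then have "map_pmf snd (couple_unif A B) = bind_pmf (pmf_of_set B) (\<lambda>y. return_pmf (Some y))"
    by (simp add: couple_unif_def map_bind_pmf map_pmf_comp if_distrib cong: if_cong)
  then show ?thesis using True by (auto simp: choose_unif_def map_pmf_def)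
qed (auto simp: couple_unif_def map_snd_pair_pmf)

lemma couple_unif_eq_or_outside:
  assumes "finite B" "A \<noteq> {}" "A \<subseteq> B" "(a, b) \<in> set_pmf (couple_unif A B)"
  shows "a = b \<or> (\<exists>y \<in> B - A. b = Some y)"
proof -
  have "B \<noteq> {}" using assms(2,3) by blast
  with assms finite_subset[OF \<open>A \<subseteq> B\<close>] show ?thesis
    by (auto simp: couple_unif_def split: if_splits)
qed

lemma set_pmf_choose_unif:
  "finite C \<Longrightarrow> set_pmf (choose_unif C) = (if C = {} then {None} else Some ` C)"
  by (simp add: choose_unif_def)

section \<open>Configurations and coupled kill steps\<close>

lemma mass_mono: "p \<subseteq># q \<Longrightarrow> mass p A \<le> mass q A"
  unfolding mass_def by (intro size_mset_mono multiset_filter_mono)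

lemma mass_singleton: "mass N {y} = count N y"
  unfolding mass_def by (simp add: filter_eq_replicate_mset)

lemma abs_le_iff_subseteq_mset:
  fixes p q :: "'b::metric_space multiset"
  shows "abs_le p q \<longleftrightarrow> p \<subseteq># q"
proof
  assume le: "abs_le p q"
  show "p \<subseteq># q"
  proof (rule mset_subset_eqI)
    fix y
    have "{y} \<in> sets (borel :: 'b measure)" by (rule borel_closed) simp
    then have "mass p {y} \<le> mass q {y}" using le by (auto simp: abs_le_def)
    then show "count p y \<le> count q y" by (simp add: mass_singleton)
  qed
qed (auto simp: abs_le_def mass_mono)

lemma cand_ball_eq_empty: "mass N (oball x 1) = 0 \<Longrightarrow> cand_ball x N = {}"
  unfolding mass_def cand_ball_def by (auto simp: filter_mset_eq_conv)

lemma finite_cand_ball: "finite (cand_ball x N)"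
  unfolding cand_ball_def by simp

lemma cand_ball_mono: "p \<subseteq># q \<Longrightarrow> cand_ball x p \<subseteq> cand_ball x q"
  unfolding cand_ball_def by (auto dest: mset_subset_eqD)

definition remove_opt :: "'b multiset \<Rightarrow> 'b option \<Rightarrow> 'b multiset" where
  "remove_opt N ko = (case ko of None \<Rightarrow> N | Some y \<Rightarrow> N - {#y#})"

lemma remove_opt_subseteq: "remove_opt N ko \<subseteq># N"
  by (cases ko) (auto simp: remove_opt_def)

lemma remove_opt_mono:
  assumes pq: "p \<subseteq># q" and "a = b \<or> b = None \<or> (\<exists>y. b = Some y \<and> y \<notin># p)"
  shows "remove_opt p a \<subseteq># remove_opt q b"
proof -
  consider "a = b" | "b = None" | y where "b = Some y" "y \<notin># p" using assms(2) by blast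
  then show ?thesis
  proof cases
    case 1
    then show ?thesis
      using pq by (cases b) (auto simp: remove_opt_def subseteq_mset_def intro: diff_le_mono)
  next
    case 2
    then show ?thesis using subset_mset.order_trans[OF remove_opt_subseteq pq]
      by (simp add: remove_opt_def)
  next
    case 3
    then have "p \<subseteq># q - {#y#}" using pq by (auto simp: subseteq_mset_def not_in_iff)
    then show ?thesis using 3 subset_mset.order_trans[OF remove_opt_subseteq]
      by (simp add: remove_opt_def)
  qed
qed

lemma step_Minus:
  "step t Minus x N = (if mass N (oball x 1) = 0 then return_pmf N else map_pmf (remove_opt N) (t x N))"
  unfolding step_def remove_opt_def by simp

locale monotone_selection =
  fixes sel :: "'b::metric_space \<Rightarrow> 'b multiset \<Rightarrow> 'b set"
  assumes sel_subset_cand_ball: "sel x N \<subseteq> cand_ball x N"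
    and sel_restrict: "p \<subseteq># q \<Longrightarrow> y \<in> sel x q \<Longrightarrow> y \<in># p \<Longrightarrow> y \<in> sel x p"
    and sel_mono_if_shared: "p \<subseteq># q \<Longrightarrow> y \<in> sel x q \<Longrightarrow> y \<in># p \<Longrightarrow> sel x p \<subseteq> sel x q"
begin

lemma finite_sel: "finite (sel x N)"
  by (rule finite_subset[OF sel_subset_cand_ball finite_cand_ball])

definition coupled_step :: "sgn \<Rightarrow> 'b \<Rightarrow> 'b multiset \<times> 'b multiset \<Rightarrow> ('b multiset \<times> 'b multiset) pmf"
  where
  "coupled_step s x pq = (case pq of (p, q) \<Rightarrow> (case s of
      Plus \<Rightarrow> return_pmf (p + {#x#}, q + {#x#})
    | Minus \<Rightarrow> (if mass q (oball x 1) = 0 then return_pmf (p, q)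
               else map_pmf (map_prod (remove_opt p) (remove_opt q)) (couple_unif (sel x p) (sel x q)))))"

lemma map_fst_coupled_step:
  assumes "p \<subseteq># q"
  shows "map_pmf fst (coupled_step s x (p, q)) = step (\<lambda>x N. choose_unif (sel x N)) s x p"
proof (cases s)
  case Minus
  show ?thesis
  proof (cases "mass q (oball x 1) = 0")
    case True
    then have "mass p (oball x 1) = 0" using mass_mono[OF assms, of "oball x 1"] by simp
    then show ?thesis using True Minus by (simp add: coupled_step_def step_Minus)
  next
    case False
    then have "map_pmf fst (coupled_step s x (p, q))
        = map_pmf (remove_opt p) (map_pmf fst (couple_unif (sel x p) (sel x q)))"
      using Minus by (simp add: coupled_step_def map_pmf_comp)
    also have "\<dots> = map_pmf (remove_opt p) (choose_unif (sel x p))"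
      by (simp add: map_fst_couple_unif finite_sel)
    finally have fst_eq: "map_pmf fst (coupled_step s x (p, q)) = \<dots>" .
    show ?thesis
    proof (cases "mass p (oball x 1) = 0")
      case True
      then have "sel x p = {}"
        using sel_subset_cand_ball cand_ball_eq_empty[OF True] by blast
      with fst_eq True Minus show ?thesis by (simp add: step_Minus choose_unif_def remove_opt_def)
    qed (use fst_eq Minus in \<open>simp add: step_Minus\<close>)
  qed
qed (simp add: coupled_step_def step_def)

lemma map_snd_coupled_step:
  "map_pmf snd (coupled_step s x (p, q)) = step (\<lambda>x N. choose_unif (sel x N)) s x q"
proof (cases "s = Minus \<and> mass q (oball x 1) \<noteq> 0")
  case True
  then have "map_pmf snd (coupled_step s x (p, q))
      = map_pmf (remove_opt q) (map_pmf snd (couple_unif (sel x p) (sel x q)))"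
    by (auto simp: coupled_step_def map_pmf_comp)
  then show ?thesis using True by (simp add: map_snd_couple_unif step_Minus)
next
  case False
  then show ?thesis by (cases s) (auto simp: coupled_step_def step_def)
qed

lemma couple_unif_sel_compatible:
  assumes pq: "p \<subseteq># q" and ab: "(a, b) \<in> set_pmf (couple_unif (sel x p) (sel x q))"
  shows "a = b \<or> b = None \<or> (\<exists>y. b = Some y \<and> y \<notin># p)"
proof -
  have "b \<in> set_pmf (map_pmf snd (couple_unif (sel x p) (sel x q)))"
    using ab by force
  then have b: "b = None \<or> (\<exists>y \<in> sel x q. b = Some y)"
    by (auto simp: map_snd_couple_unif set_pmf_choose_unif[OF finite_sel] split: if_splits)
  show ?thesis
  proof (cases "\<exists>y \<in> sel x q. y \<in># p")
    case True
    then have sub: "sel x p \<subseteq> sel x q" and ne: "sel x p \<noteq> {}"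
      using sel_mono_if_shared[OF pq] sel_restrict[OF pq] by blast+
    from couple_unif_eq_or_outside[OF finite_sel ne sub ab] sel_restrict[OF pq]
    show ?thesis by blast
  qed (use b in blast)
qed

lemma coupled_step_subseteq:
  assumes pq: "p \<subseteq># q" and mem: "(p', q') \<in> set_pmf (coupled_step s x (p, q))"
  shows "p' \<subseteq># q'"
proof (cases "s = Minus \<and> mass q (oball x 1) \<noteq> 0")
  case True
  then obtain a b where ab: "(a, b) \<in> set_pmf (couple_unif (sel x p) (sel x q))"
    and "p' = remove_opt p a" "q' = remove_opt q b"
    using mem by (auto simp: coupled_step_def)
  then show ?thesis using remove_opt_mono[OF pq couple_unif_sel_compatible[OF pq ab]] by simp
next
  case False
  with mem pq show ?thesis by (cases s) (auto simp: coupled_step_def)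
qed

lemma coupled_step_set_mset:
  assumes "(p', q') \<in> set_pmf (coupled_step s x (p, q))"
  shows "set_mset p' \<subseteq> insert x (set_mset p) \<and> set_mset q' \<subseteq> insert x (set_mset q)"
proof (cases "s = Minus \<and> mass q (oball x 1) \<noteq> 0")
  case True
  then obtain a b where "p' = remove_opt p a" "q' = remove_opt q b"
    using assms by (auto simp: coupled_step_def)
  then show ?thesis
    using remove_opt_subseteq[of p a] remove_opt_subseteq[of q b] by (auto dest: mset_subset_eqD)
next
  case False
  with assms show ?thesis by (cases s) (auto simp: coupled_step_def)
qed

end

lemma monotone_selection_cand_ball: "monotone_selection cand_ball"
  by unfold_locales (auto simp: cand_ball_def dest: mset_subset_eqD)

lemma monotone_selection_orthant:
  "monotone_selection (\<lambda>x N. {y \<in> cand_ball x N. \<forall>k. x $ k \<le> y $ k})"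
  by unfold_locales (auto simp: cand_ball_def dest: mset_subset_eqD)

lemma monotone_selection_closest:
  assumes "monotone_selection sel" and mono: "\<And>x p q. p \<subseteq># q \<Longrightarrow> sel x p \<subseteq> sel x q"
  shows "monotone_selection (\<lambda>x N. closest x (sel x N))"
proof -
  interpret monotone_selection sel by fact
  show ?thesis
  proof
    fix x N show "closest x (sel x N) \<subseteq> cand_ball x N"
      using sel_subset_cand_ball by (auto simp: closest_def)
  next
    fix p q y x assume pq: "p \<subseteq># q" and y: "y \<in> closest x (sel x q)" and "y \<in># p"
    then have yp: "y \<in> sel x p" using sel_restrict by (auto simp: closest_def)
    then show "y \<in> closest x (sel x p)" using y mono[OF pq] by (auto simp: closest_def)
    show "closest x (sel x p) \<subseteq> closest x (sel x q)"
    proof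
      fix z assume z: "z \<in> closest x (sel x p)"
      then have "dist x z \<le> dist x y" using yp by (auto simp: closest_def)
      with y z mono[OF pq] show "z \<in> closest x (sel x q)"
        by (force simp: closest_def)
    qed
  qed
qed

section \<open>Path measures of chains with pmf transitions\<close>

primrec chain_pmf :: "(nat \<Rightarrow> 's \<Rightarrow> 's pmf) \<Rightarrow> 's \<Rightarrow> nat \<Rightarrow> 's list pmf" where
  "chain_pmf K s0 0 = return_pmf [s0]"
| "chain_pmf K s0 (Suc n) =
     bind_pmf (chain_pmf K s0 n) (\<lambda>l. map_pmf (\<lambda>s. l @ [s]) (K (Suc n) (last l)))"

lemma path_pmf_eq_chain_pmf: "path_pmf t i x N0 n = chain_pmf (\<lambda>n. step t (i n) (x n)) N0 n"
  by (induction n) simp_all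

lemma chain_pmf_last_in:
  assumes "s0 \<in> R" and closed: "\<And>n s. s \<in> R \<Longrightarrow> set_pmf (K n s) \<subseteq> R"
  shows "l \<in> set_pmf (chain_pmf K s0 n) \<Longrightarrow> l \<noteq> [] \<and> last l \<in> R"
proof (induction n arbitrary: l)
  case 0
  then show ?case using assms(1) by simp
next
  case (Suc n)
  then obtain l0 s where "l0 \<in> set_pmf (chain_pmf K s0 n)" "s \<in> set_pmf (K (Suc n) (last l0))"
    "l = l0 @ [s]"
    by auto
  with Suc.IH closed show ?case by auto
qed

lemma map_chain_pmf:
  assumes "s0 \<in> R" and closed: "\<And>n s. s \<in> R \<Longrightarrow> set_pmf (K n s) \<subseteq> R"
    and map_K: "\<And>n s. s \<in> R \<Longrightarrow> map_pmf f (K n s) = K' n (f s)"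
  shows "map_pmf (map f) (chain_pmf K s0 n) = chain_pmf K' (f s0) n"
proof (induction n)
  case (Suc n)
  have "map_pmf (map f) (chain_pmf K s0 (Suc n))
      = bind_pmf (chain_pmf K s0 n) (\<lambda>l. map_pmf (\<lambda>s. map f l @ [s]) (map_pmf f (K (Suc n) (last l))))"
    by (simp add: map_bind_pmf map_pmf_comp)
  also have "\<dots> = bind_pmf (chain_pmf K s0 n)
      (\<lambda>l. map_pmf (\<lambda>s. map f l @ [s]) (K' (Suc n) (last (map f l))))"
  proof (rule bind_pmf_cong[OF refl])
    fix l assume "l \<in> set_pmf (chain_pmf K s0 n)"
    with chain_pmf_last_in[OF assms(1) closed] have "l \<noteq> []" "last l \<in> R" by auto
    then show "map_pmf (\<lambda>s. map f l @ [s]) (map_pmf f (K (Suc n) (last l)))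
        = map_pmf (\<lambda>s. map f l @ [s]) (K' (Suc n) (last (map f l)))"
      by (simp add: map_K last_map)
  qed
  also have "\<dots> = chain_pmf K' (f s0) (Suc n)"
    by (simp add: bind_map_pmf flip: Suc.IH)
  finally show ?case .
qed simp

lemma prefix_event_in_sets:
  assumes "\<And>k c. k < m \<Longrightarrow> {\<omega> \<in> space N. F k \<omega> = c} \<in> sets N"
  shows "{\<omega> \<in> space N. map (\<lambda>k. F k \<omega>) [0..<m] = l} \<in> sets N"
  using assms
proof (induction m arbitrary: l)
  case 0
  show ?case by (cases l) auto
next
  case (Suc m)
  show ?case
  proof (cases "l = []")
    case False
    then have "{\<omega> \<in> space N. map (\<lambda>k. F k \<omega>) [0..<Suc m] = l} =
      {\<omega> \<in> space N. map (\<lambda>k. F k \<omega>) [0..<m] = butlast l} \<inter> {\<omega> \<in> space N. F m \<omega> = last l}"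
      by (auto simp: snoc_eq_iff_butlast)
    then show ?thesis using Suc by auto
  qed simp
qed

lemma PiM_component_event:
  "k \<in> J \<Longrightarrow> {\<omega> \<in> space (PiM J (\<lambda>_. count_space UNIV)). P (\<omega> k)} \<in> sets (PiM J (\<lambda>_. count_space UNIV))"
  using measurable_sets[OF measurable_component_singleton[of k J "\<lambda>_. count_space UNIV"], of "Collect P"]
  by (simp add: vimage_def Int_def conj_commute)

lemma measurable_prefix:
  assumes "{0..<m} \<subseteq> J"
  shows "(\<lambda>\<omega>::nat \<Rightarrow> 's::countable. map \<omega> [0..<m])
    \<in> measurable (PiM J (\<lambda>_. count_space UNIV)) (count_space UNIV)"
proof -
  have "{\<omega> \<in> space (PiM J (\<lambda>_. count_space UNIV)). map (\<lambda>k. \<omega> k) [0..<m] = l}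
      \<in> sets (PiM J (\<lambda>_. count_space (UNIV :: 's set)))" for l
    using assms by (intro prefix_event_in_sets PiM_component_event) auto
  then show ?thesis
    by (subst measurable_count_space_eq2_countable) (auto simp: vimage_def Int_def conj_commute)
qed

locale countable_pmf_chain =
  fixes K :: "nat \<Rightarrow> 's::countable \<Rightarrow> 's pmf" and s0 :: 's
begin

definition transition :: "nat \<Rightarrow> (nat \<Rightarrow> 's) \<Rightarrow> 's measure" where
  "transition k \<omega> = measure_pmf (if k = 0 then return_pmf s0 else K k (\<omega> (k - 1)))"

lemma Ionescu_Tulcea_transition: "Ionescu_Tulcea transition (\<lambda>_. count_space UNIV)"
proof (rule Ionescu_Tulcea.intro)
  fix k
  show "transition k
    \<in> measurable (PiM {0..<k} (\<lambda>_. count_space UNIV)) (subprob_algebra (count_space UNIV))"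
  proof (cases k)
    case (Suc n)
    have "(\<lambda>\<omega>. \<omega> n) \<in> measurable (PiM {0..<k} (\<lambda>_. count_space UNIV)) (count_space UNIV)"
      using Suc by (intro measurable_component_singleton) auto
    moreover have "(\<lambda>s. measure_pmf (K k s)) \<in> measurable (count_space UNIV) (subprob_algebra (count_space UNIV))"
      by (simp add: measure_pmf_in_subprob_algebra)
    ultimately have "(\<lambda>\<omega>. measure_pmf (K k (\<omega> n)))
        \<in> measurable (PiM {0..<k} (\<lambda>_. count_space UNIV)) (subprob_algebra (count_space UNIV))"
      by (rule measurable_compose)
    then show ?thesis using Suc by (simp add: transition_def[abs_def])
  qed (simp add: transition_def[abs_def] measure_pmf_in_subprob_algebra)
qed (simp add: transition_def measure_pmf.prob_space_axioms)

end

sublocale countable_pmf_chain \<subseteq> Ionescu_Tulcea transition "\<lambda>_. count_space UNIV"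
  by (rule Ionescu_Tulcea_transition)

context countable_pmf_chain
begin

lemma measurable_fun_upd_transition:
  "\<omega> \<in> space (PiM {0..<k} (\<lambda>_. count_space UNIV))
    \<Longrightarrow> fun_upd \<omega> k \<in> measurable (transition k \<omega>) (PiM {0..<Suc k} (\<lambda>_. count_space UNIV))"
  by (auto simp: transition_def space_PiM PiE_iff extensional_def)

lemma distr_eP_prefix:
  assumes \<omega>: "\<omega> \<in> space (PiM {0..<k} (\<lambda>_. count_space UNIV))"
  shows "distr (eP k \<omega>) (count_space UNIV) (\<lambda>\<omega>. map \<omega> [0..<Suc k])
    = measure_pmf (map_pmf (\<lambda>s. map \<omega> [0..<k] @ [s])
        (if k = 0 then return_pmf s0 else K k (\<omega> (k - 1))))"
proof -
  have "distr (eP k \<omega>) (count_space UNIV) (\<lambda>\<omega>. map \<omega> [0..<Suc k])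
      = distr (transition k \<omega>) (count_space UNIV) (\<lambda>s. map (fun_upd \<omega> k s) [0..<Suc k])"
    unfolding eP_def
    by (subst distr_distr[OF measurable_prefix measurable_fun_upd_transition[OF \<omega>]]) (auto simp: comp_def)
  also have "\<dots> = distr (transition k \<omega>) (count_space UNIV) (\<lambda>s. map \<omega> [0..<k] @ [s])"
    by (rule distr_cong) auto
  finally show ?thesis by (simp add: transition_def map_pmf_rep_eq)
qed

lemma distr_C_prefix_Suc:
  "distr (C 0 (Suc (Suc n)) (\<lambda>_. undefined)) (count_space UNIV) (\<lambda>\<omega>. map \<omega> [0..<Suc (Suc n)])
    = distr (C 0 (Suc n) (\<lambda>_. undefined)) (count_space UNIV) (\<lambda>\<omega>. map \<omega> [0..<Suc n])
        \<bind> (\<lambda>l. measure_pmf (map_pmf (\<lambda>s. l @ [s]) (K (Suc n) (last l))))"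
  (is "_ = Giry_Monad.bind _ ?h")
proof -
  let ?u = "\<lambda>_::nat. undefined :: 's" and ?PM = "\<lambda>m. PiM {0..<m} (\<lambda>_. count_space (UNIV :: 's set))"
  have u: "?u \<in> space (?PM 0)" by (simp add: space_PiM_empty)
  interpret Cn: prob_space "C 0 (Suc n) ?u" using u by (intro prob_space_C) simp
  have sC: "sets (C 0 (Suc n) ?u) = sets (?PM (Suc n))"
    using sets_C[OF u, of "Suc n"] by simp
  have ePm: "eP (Suc n) \<in> measurable (C 0 (Suc n) ?u) (subprob_algebra (?PM (Suc (Suc n))))"
    unfolding measurable_cong_sets[OF sC refl] by (rule measurable_eP)
  have prefix_m: "(\<lambda>\<omega>. map \<omega> [0..<Suc n]) \<in> measurable (C 0 (Suc n) ?u) (count_space UNIV)"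
    unfolding measurable_cong_sets[OF sC refl] by (rule measurable_prefix) simp
  have h_m: "?h \<in> measurable (count_space UNIV) (subprob_algebra (count_space UNIV))"
    by (simp add: measure_pmf_in_subprob_algebra)
  have "distr (C 0 (Suc (Suc n)) ?u) (count_space UNIV) (\<lambda>\<omega>. map \<omega> [0..<Suc (Suc n)])
      = C 0 (Suc n) ?u \<bind> (\<lambda>\<omega>. distr (eP (Suc n) \<omega>) (count_space UNIV) (\<lambda>\<omega>. map \<omega> [0..<Suc (Suc n)]))"
    using distr_bind[OF ePm Cn.not_empty measurable_prefix[of "Suc (Suc n)" "{0..<Suc (Suc n)}"]] by simp
  also have "\<dots> = C 0 (Suc n) ?u \<bind> (\<lambda>\<omega>. ?h (map \<omega> [0..<Suc n]))"
  proof (rule bind_cong[OF refl])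
    fix \<omega> assume "\<omega> \<in> space (C 0 (Suc n) ?u)"
    then have \<omega>: "\<omega> \<in> space (?PM (Suc n))" using space_C[OF u, of "Suc n"] by simp
    have "last (map \<omega> [0..<Suc n]) = \<omega> n" by simp
    then show "distr (eP (Suc n) \<omega>) (count_space UNIV) (\<lambda>\<omega>. map \<omega> [0..<Suc (Suc n)])
        = ?h (map \<omega> [0..<Suc n])"
      using distr_eP_prefix[OF \<omega>] by (simp del: upt_Suc)
  qed
  also have "\<dots> = distr (C 0 (Suc n) ?u) (count_space UNIV) (\<lambda>\<omega>. map \<omega> [0..<Suc n]) \<bind> ?h"
    by (rule bind_distr[OF prefix_m h_m Cn.not_empty, symmetric])
  finally show ?thesis .
qed

lemma distr_C_prefix:
  "distr (C 0 (Suc n) (\<lambda>_. undefined)) (count_space UNIV) (\<lambda>\<omega>. map \<omega> [0..<Suc n])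
    = measure_pmf (chain_pmf K s0 n)"
proof (induction n)
  case 0
  have "return (PiM {0..<0} (\<lambda>_. count_space UNIV)) (\<lambda>_. undefined) \<bind> eP 0
      = eP 0 (\<lambda>_. undefined :: 's)"
    by (rule bind_return[OF measurable_eP]) (simp add: space_PiM_empty)
  then show ?case using distr_eP_prefix[of "\<lambda>_. undefined" 0] by (simp add: space_PiM_empty)
next
  case (Suc n)
  then show ?case by (simp only: distr_C_prefix_Suc) (simp add: measure_pmf_bind)
qed

lemma up_to_atLeastLessThan: "up_to {0..<m} = m"
proof (rule antisym)
  show "m \<le> up_to {0..<m}"
    using up_to_less[of "{0..<m}" "m - 1"] by (cases m) auto
qed (simp add: up_to_iff_Ico)

lemma distr_lim_prefix:
  "distr PF.lim (count_space UNIV) (\<lambda>\<omega>. map \<omega> [0..<Suc n]) = measure_pmf (chain_pmf K s0 n)"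
proof -
  let ?u = "\<lambda>_::nat. undefined :: 's" and ?PM = "\<lambda>J. PiM J (\<lambda>_. count_space (UNIV :: 's set))"
  have restrict_lim: "(\<lambda>\<omega>. restrict \<omega> J) \<in> measurable PF.lim (?PM J)" for J
    by (simp add: measurable_cong_sets[OF PF.sets_lim refl] measurable_restrict_subset)
  have restrict_C: "(\<lambda>\<omega>. restrict \<omega> {0..<m}) \<in> measurable (C 0 m ?u) (?PM {0..<m})" for m
    by (simp add: measurable_cong_sets[OF sets_C refl] measurable_restrict_subset space_PiM_empty)
  have "distr PF.lim (count_space UNIV) (\<lambda>\<omega>. map \<omega> [0..<Suc n])
      = distr (distr PF.lim (?PM {0..<Suc n}) (\<lambda>\<omega>. restrict \<omega> {0..<Suc n}))
          (count_space UNIV) (\<lambda>\<omega>. map \<omega> [0..<Suc n])"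
    by (subst distr_distr[OF measurable_prefix restrict_lim]) (auto simp: comp_def intro!: distr_cong)
  also have "\<dots> = distr (distr (C 0 (Suc n) ?u) (?PM {0..<Suc n}) (\<lambda>\<omega>. restrict \<omega> {0..<Suc n}))
          (count_space UNIV) (\<lambda>\<omega>. map \<omega> [0..<Suc n])"
    by (simp add: distr_lim CI_def up_to_atLeastLessThan)
  also have "\<dots> = distr (C 0 (Suc n) ?u) (count_space UNIV) (\<lambda>\<omega>. map \<omega> [0..<Suc n])"
    by (subst distr_distr[OF measurable_prefix restrict_C]) (auto simp: comp_def intro!: distr_cong)
  finally show ?thesis by (simp only: distr_C_prefix)
qed

lemma prob_space_lim: "prob_space PF.lim"
proof
  have "emeasure PF.lim (space PF.lim)
      = emeasure (distr PF.lim (count_space UNIV) (\<lambda>\<omega>. map \<omega> [0..<Suc 0])) UNIV"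
    by (subst emeasure_distr)
      (auto simp: measurable_cong_sets[OF PF.sets_lim refl] intro: measurable_prefix)
  then show "emeasure PF.lim (space PF.lim) = 1"
    by (simp only: distr_lim_prefix) (simp add: measure_pmf.emeasure_space_1[simplified])
qed

end

lemma chain_path_measure:
  fixes K :: "nat \<Rightarrow> 's \<Rightarrow> 's pmf"
  assumes "countable R" "s0 \<in> R" and closed: "\<And>n s. s \<in> R \<Longrightarrow> set_pmf (K n s) \<subseteq> R"
  obtains M :: "(nat \<Rightarrow> 's) measure"
  where "prob_space M" "sets M = sets (PiM UNIV (\<lambda>_. count_space UNIV))"
    "\<And>n (f :: 's \<Rightarrow> 'c) l. measure M {\<omega> \<in> space M. map (\<lambda>k. f (\<omega> k)) [0..<Suc n] = l}
      = pmf (map_pmf (map f) (chain_pmf K s0 n)) l"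
    "AE \<omega> in M. \<forall>n. \<omega> n \<in> R"
proof -
  text \<open>Run the chain on indices of the countable set \<open>R\<close> and decode afterwards.\<close>
  define enc where "enc = to_nat_on R"
  define dec where "dec = from_nat_into R"
  have dec_in: "dec j \<in> R" for j
    unfolding dec_def by (rule from_nat_into) (use \<open>s0 \<in> R\<close> in blast)
  have dec_enc: "s \<in> R \<Longrightarrow> dec (enc s) = s" for s
    unfolding dec_def enc_def by (rule from_nat_into_to_nat_on[OF \<open>countable R\<close>])
  define Kn where "Kn n j = map_pmf enc (K n (dec j))" for n j
  interpret countable_pmf_chain Kn "enc s0" .
  have map_Kn: "map_pmf dec (Kn n j) = K n (dec j)" for n j
  proof -
    have "map_pmf (\<lambda>s. dec (enc s)) (K n (dec j)) = map_pmf id (K n (dec j))"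
      by (rule map_pmf_cong[OF refl]) (use closed[OF dec_in] dec_enc in auto)
    then show ?thesis by (simp add: Kn_def map_pmf_comp)
  qed
  have chain_dec: "map_pmf (map dec) (chain_pmf Kn (enc s0) n) = chain_pmf K s0 n" for n
    using map_chain_pmf[of "enc s0" UNIV Kn dec K, OF _ _ map_Kn] dec_enc[OF \<open>s0 \<in> R\<close>] by simp
  let ?PM = "PiM UNIV (\<lambda>_. count_space (UNIV :: 's set))"
  let ?Phi = "\<lambda>\<omega> k. dec (\<omega> k)"
  have prefix_lim: "(\<lambda>\<omega>. map \<omega> [0..<m]) \<in> measurable PF.lim (count_space UNIV)" for m
    by (simp add: measurable_cong_sets[OF PF.sets_lim refl] measurable_prefix)
  have Phi: "?Phi \<in> measurable PF.lim ?PM"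
  proof (rule measurable_PiM_single')
    fix k
    have "(\<lambda>\<omega>. \<omega> k) \<in> measurable PF.lim (count_space UNIV)"
      by (simp add: measurable_cong_sets[OF PF.sets_lim refl])
    then show "(\<lambda>\<omega>. dec (\<omega> k)) \<in> measurable PF.lim (count_space UNIV)"
      by (rule measurable_compose) simp
  qed (auto simp: PiE_def)
  define M where "M = distr PF.lim ?PM ?Phi"
  interpret L: prob_space PF.lim by (rule prob_space_lim)
  show ?thesis
  proof
    show "prob_space M" unfolding M_def by (rule L.prob_space_distr[OF Phi])
    show "sets M = sets ?PM" by (simp add: M_def)
  next
    fix n l and f :: "'s \<Rightarrow> 'c"
    let ?E = "{\<omega> \<in> space ?PM. map (\<lambda>k. f (\<omega> k)) [0..<Suc n] = l}"
    have E: "?E \<in> sets ?PM"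
      by (intro prefix_event_in_sets PiM_component_event) simp
    have "measure M ?E = measure PF.lim (?Phi -` ?E \<inter> space PF.lim)"
      unfolding M_def using E by (simp add: measure_distr[OF Phi])
    also have "?Phi -` ?E \<inter> space PF.lim
        = (\<lambda>\<omega>. map \<omega> [0..<Suc n]) -` {l'. map (f \<circ> dec) l' = l} \<inter> space PF.lim"
      by (auto simp: space_PiM)
    also have "measure PF.lim \<dots> = measure (distr PF.lim (count_space UNIV) (\<lambda>\<omega>. map \<omega> [0..<Suc n]))
        {l'. map (f \<circ> dec) l' = l}"
      by (rule measure_distr[OF prefix_lim, symmetric]) simp
    also have "\<dots> = measure (measure_pmf (chain_pmf Kn (enc s0) n)) {l'. map (f \<circ> dec) l' = l}"
      by (simp only: distr_lim_prefix)
    also have "\<dots> = pmf (map_pmf (map f) (chain_pmf K s0 n)) l"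
      unfolding chain_dec[symmetric] map_pmf_comp pmf_map by (simp add: vimage_def)
    finally show "measure M {\<omega> \<in> space M. map (\<lambda>k. f (\<omega> k)) [0..<Suc n] = l} = \<dots>"
      by (simp add: M_def)
  next
    have "AE \<omega> in M. \<omega> n \<in> R" for n
      unfolding M_def using dec_in PiM_component_event[of n UNIV "\<lambda>s. s \<in> R"]
      by (subst AE_distr_iff[OF Phi]) auto
    then show "AE \<omega> in M. \<forall>n. \<omega> n \<in> R" by (simp add: AE_all_countable)
  qed
qed

section \<open>Coupled evolutions\<close>

lemma countable_multisets_over: "countable A \<Longrightarrow> countable {M. set_mset M \<subseteq> A}"
proof -
  assume "countable A"
  have "{M. set_mset M \<subseteq> A} \<subseteq> mset ` lists A"
  proof
    fix M assume "M \<in> {M. set_mset M \<subseteq> A}"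
    moreover obtain xs where "mset xs = M" using ex_mset by blast
    ultimately show "M \<in> mset ` lists A" by (auto intro!: image_eqI[of _ _ xs])
  qed
  then show ?thesis by (rule countable_subset) (intro countable_image countable_lists \<open>countable A\<close>)
qed

lemma coupling_existsI:
  fixes Kc :: "nat \<Rightarrow> 'b::metric_space multiset \<times> 'b multiset \<Rightarrow> ('b multiset \<times> 'b multiset) pmf"
  assumes "countable R" "(P0, Q0) \<in> R" and closed: "\<And>n s. s \<in> R \<Longrightarrow> set_pmf (Kc n s) \<subseteq> R"
    and R_subseteq: "\<And>p q. (p, q) \<in> R \<Longrightarrow> p \<subseteq># q"
    and map_fst: "\<And>n s. s \<in> R \<Longrightarrow> map_pmf fst (Kc n s) = step t (i n) (x n) (fst s)"
    and map_snd: "\<And>n s. s \<in> R \<Longrightarrow> map_pmf snd (Kc n s) = step t (i n) (x n) (snd s)"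
  shows "coupling_exists t i x P0 Q0"
proof -
  obtain M :: "(nat \<Rightarrow> 'b multiset \<times> 'b multiset) measure"
    where M: "prob_space M" "sets M = sets (PiM UNIV (\<lambda>_. count_space UNIV))"
      and prefix: "\<And>n (f :: 'b multiset \<times> 'b multiset \<Rightarrow> 'b multiset) l.
        measure M {\<omega> \<in> space M. map (\<lambda>k. f (\<omega> k)) [0..<Suc n] = l}
        = pmf (map_pmf (map f) (chain_pmf Kc (P0, Q0) n)) l"
      and AE_R: "AE \<omega> in M. \<forall>n. \<omega> n \<in> R"
    using chain_path_measure[where K = Kc, OF assms(1,2) closed] by blast
  have events: "{\<omega> \<in> space M. map (\<lambda>k. f (\<omega> k)) [0..<Suc n] = l} \<in> sets M" for f n l
    unfolding sets_eq_imp_space_eq[OF M(2)] M(2)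
    by (intro prefix_event_in_sets PiM_component_event) simp
  have marg: "map_pmf (map fst) (chain_pmf Kc (P0, Q0) n) = path_pmf t i x P0 n"
    "map_pmf (map snd) (chain_pmf Kc (P0, Q0) n) = path_pmf t i x Q0 n" for n
    using map_chain_pmf[where K = Kc, OF assms(2) closed map_fst]
      map_chain_pmf[where K = Kc, OF assms(2) closed map_snd]
    by (simp_all add: path_pmf_eq_chain_pmf)
  have "AE \<omega> in M. \<forall>n. abs_le (fst (\<omega> n)) (snd (\<omega> n))"
    using AE_R by eventually_elim (auto simp: abs_le_iff_subseteq_mset intro: R_subseteq)
  then show ?thesis
    unfolding coupling_exists_def
    using prefix[of fst] prefix[of snd]
    by (intro exI[of _ M] conjI allI M(1) events) (simp_all only: marg)
qed

context monotone_selection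
begin

theorem coupling_exists_choose_unif_sel:
  assumes "P0 \<subseteq># Q0"
  shows "coupling_exists (\<lambda>x N. choose_unif (sel x N)) I X P0 Q0"
proof -
  define Pts where "Pts = set_mset P0 \<union> set_mset Q0 \<union> range X"
  define R where "R = {(p, q). p \<subseteq># q \<and> set_mset q \<subseteq> Pts}"
  have "R \<subseteq> {M. set_mset M \<subseteq> Pts} \<times> {M. set_mset M \<subseteq> Pts}"
    by (auto simp: R_def dest: mset_subset_eqD)
  moreover have "countable Pts" by (simp add: Pts_def countable_finite)
  ultimately have "countable R"
    by (elim countable_subset) (intro countable_SIGMA countable_multisets_over)
  moreover have "(P0, Q0) \<in> R" using assms by (auto simp: R_def Pts_def)
  moreover have "set_pmf (coupled_step (I n) (X n) s) \<subseteq> R" if "s \<in> R" for n s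
  proof (clarify)
    fix p' q' assume step: "(p', q') \<in> set_pmf (coupled_step (I n) (X n) s)"
    obtain p q where s: "s = (p, q)" "p \<subseteq># q" "set_mset q \<subseteq> Pts"
      using \<open>s \<in> R\<close> by (auto simp: R_def)
    have "p' \<subseteq># q'" using coupled_step_subseteq step s by simp
    moreover have "set_mset q' \<subseteq> Pts"
      using coupled_step_set_mset step s by (fastforce simp: Pts_def)
    ultimately show "(p', q') \<in> R" by (simp add: R_def)
  qed
  ultimately show ?thesis
    by (rule coupling_existsI) (auto simp: R_def map_fst_coupled_step map_snd_coupled_step)
qed

end

theorem mainTheorem2:
  fixes H :: "'a::metric_space set" and P0 Q0 :: "'a multiset"
    and i :: "nat \<Rightarrow> sgn" and x :: "nat \<Rightarrow> 'a"
    and H' :: "(real^'d) set" and P0' Q0' :: "(real^'d) multiset"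
    and x' :: "nat \<Rightarrow> real^'d"
  shows
   "(compact H \<and> set_mset P0 \<subseteq> H \<and> set_mset Q0 \<subseteq> H \<and> (\<forall>n. x n \<in> H) \<and> abs_le P0 Q0
       \<longrightarrow> coupling_exists kill_LG i x P0 Q0 \<and> coupling_exists kill_LR i x P0 Q0)
    \<and> (compact H' \<and> set_mset P0' \<subseteq> H' \<and> set_mset Q0' \<subseteq> H' \<and> (\<forall>n. x' n \<in> H') \<and> abs_le P0' Q0'
       \<longrightarrow> coupling_exists kill_LO i x' P0' Q0')"
proof (intro conjI impI)
  assume "compact H \<and> set_mset P0 \<subseteq> H \<and> set_mset Q0 \<subseteq> H \<and> (\<forall>n. x n \<in> H) \<and> abs_le P0 Q0"
  then have PQ: "P0 \<subseteq># Q0" by (simp add: abs_le_iff_subseteq_mset)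
  have LG: "monotone_selection (\<lambda>x N. closest x (cand_ball x N))"
    by (rule monotone_selection_closest[OF monotone_selection_cand_ball cand_ball_mono])
  show "coupling_exists kill_LG i x P0 Q0"
    using monotone_selection.coupling_exists_choose_unif_sel[OF LG PQ]
    by (simp add: kill_LG_def[abs_def])
  show "coupling_exists kill_LR i x P0 Q0"
    using monotone_selection.coupling_exists_choose_unif_sel[OF monotone_selection_cand_ball PQ]
    by (simp add: kill_LR_def[abs_def])
next
  assume "compact H' \<and> set_mset P0' \<subseteq> H' \<and> set_mset Q0' \<subseteq> H' \<and> (\<forall>n. x' n \<in> H') \<and> abs_le P0' Q0'"
  then have PQ: "P0' \<subseteq># Q0'" by (simp add: abs_le_iff_subseteq_mset)
  have orthant_mono: "p \<subseteq># q \<Longrightarrow> {y \<in> cand_ball x p. \<forall>k. x $ k \<le> y $ k} \<subseteq> {y \<in> cand_ball x q. \<forall>k. x $ k \<le> y $ k}"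
    for x :: "real^'d" and p q
    using cand_ball_mono by blast
  have LO: "monotone_selection (\<lambda>(x :: real^'d) N. closest x {y \<in> cand_ball x N. \<forall>k. x $ k \<le> y $ k})"
    using monotone_selection_closest[OF monotone_selection_orthant orthant_mono] by simp
  show "coupling_exists kill_LO i x' P0' Q0'"
    using monotone_selection.coupling_exists_choose_unif_sel[OF LO PQ]
    by (simp add: kill_LO_def[abs_def])
qed

end
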